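(* Let $\mathcal G$ be a braided stability groupoid and $l,m,n$ objects of $U\mathcal G$. Then the map $\mathrm{Hom}(m,l\oplus m)\to\mathrm{Hom}(m\oplus n,l\oplus m\oplus n)$, $\psi\mapsto\psi\oplus\mathrm{id}_n$, is injective, and its image is $\{\chi\in\mathrm{Hom}(m\oplus n,l\oplus m\oplus n)\mid\chi\circ(\iota_m\oplus\mathrm{id}_n)=\iota_{l\oplus m}\oplus\mathrm{id}_n\}$.
   Context: Stability groupoid: a monoidal groupoid $(\mathcal G,\oplus,0)$ with objects $(\mathbb N,+,0)$, $G_n=\mathrm{Aut}(n)$, such that $\oplus\colon G_m\times G_n\to G_{m+n}$ is injective, $G_0$ is trivial, and $(G_{l+m}\times1)\cap(1\times G_{m+n})=1\times G_m\times1$ in $G_{l+m+n}$; braided: equipped with a braiding $b_{m,n}\in G_{m+n}$ of the monoidal groupoid. $U\mathcal G$: objects $\mathbb N$, $\mathrm{Hom}(m,n)=G_n/G_{n-m}$ for $m\le n$ ($G_{n-m}\subset G_n$ via $g\mapsto g\oplus\mathrm{id}_m$), empty otherwise; composition $fG_l\circ gG_m=f(\mathrm{id}_l\oplus g)G_{l+m}$; monoidal structure $f_1G_{m_1}\oplus f_2G_{m_2}=(f_1\oplus f_2)(\mathrm{id}_{m_1}\oplus b^{-1}_{n_1,m_2}\oplus\mathrm{id}_{n_2})G_{m_1+m_2}$ for $f_jG_{m_j}\colon n_j\to m_j+n_j$. The unit $0$ is initial; $\iota_m\colon0\to m$ is the unique morphism. *)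

theory Defs
  imports "HOL-Algebra.Coset"
begin

text \<open>A braided stability groupoid: groups G n = Aut(n) for objects n of (nat,+,0),
  a strict monoidal product t m n : G m x G n -> G (m+n), and a braiding b m n in G (m+n).
  Composition in each G n is the group multiplication (f \<otimes> g = f after g).\<close>

locale braided_stability_groupoid =
  fixes G :: "nat \<Rightarrow> 'g monoid"
    and t :: "nat \<Rightarrow> nat \<Rightarrow> 'g \<Rightarrow> 'g \<Rightarrow> 'g"
    and b :: "nat \<Rightarrow> nat \<Rightarrow> 'g"
  assumes grp: "\<And>n. group (G n)"
    and t_closed: "\<And>m n f g. f \<in> carrier (G m) \<Longrightarrow> g \<in> carrier (G n)
        \<Longrightarrow> t m n f g \<in> carrier (G (m+n))"
    and t_mult: "\<And>m n f f' g g'. f \<in> carrier (G m) \<Longrightarrow> f' \<in> carrier (G m)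
        \<Longrightarrow> g \<in> carrier (G n) \<Longrightarrow> g' \<in> carrier (G n)
        \<Longrightarrow> t m n (f \<otimes>\<^bsub>G m\<^esub> f') (g \<otimes>\<^bsub>G n\<^esub> g')
            = t m n f g \<otimes>\<^bsub>G (m+n)\<^esub> t m n f' g'"
    and t_one: "\<And>m n. t m n \<one>\<^bsub>G m\<^esub> \<one>\<^bsub>G n\<^esub> = \<one>\<^bsub>G (m+n)\<^esub>"
    and t_assoc: "\<And>l m n f g h. f \<in> carrier (G l) \<Longrightarrow> g \<in> carrier (G m)
        \<Longrightarrow> h \<in> carrier (G n)
        \<Longrightarrow> t (l+m) n (t l m f g) h = t l (m+n) f (t m n g h)"
    and t_unit_left: "\<And>n g. g \<in> carrier (G n) \<Longrightarrow> t 0 n \<one>\<^bsub>G 0\<^esub> g = g"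
    and t_unit_right: "\<And>m f. f \<in> carrier (G m) \<Longrightarrow> t m 0 f \<one>\<^bsub>G 0\<^esub> = f"
    and t_inj: "\<And>m n. inj_on (\<lambda>(f, g). t m n f g) (carrier (G m) \<times> carrier (G n))"
    and G0_trivial: "carrier (G 0) = {\<one>\<^bsub>G 0\<^esub>}"
    and intersection: "\<And>l m n.
        (\<lambda>g. t (l+m) n g \<one>\<^bsub>G n\<^esub>) ` carrier (G (l+m))
        \<inter> (\<lambda>g. t l (m+n) \<one>\<^bsub>G l\<^esub> g) ` carrier (G (m+n))
        = (\<lambda>g. t l (m+n) \<one>\<^bsub>G l\<^esub> (t m n g \<one>\<^bsub>G n\<^esub>)) ` carrier (G m)"
    and b_closed: "\<And>m n. b m n \<in> carrier (G (m+n))"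
    and b_natural: "\<And>m n f g. f \<in> carrier (G m) \<Longrightarrow> g \<in> carrier (G n)
        \<Longrightarrow> b m n \<otimes>\<^bsub>G (m+n)\<^esub> t m n f g = t n m g f \<otimes>\<^bsub>G (m+n)\<^esub> b m n"
    and hexagon1: "\<And>l m n. b l (m+n)
        = t m (l+n) \<one>\<^bsub>G m\<^esub> (b l n) \<otimes>\<^bsub>G (l+m+n)\<^esub> t (l+m) n (b l m) \<one>\<^bsub>G n\<^esub>"
    and hexagon2: "\<And>l m n. b (l+m) n
        = t (l+n) m (b l n) \<one>\<^bsub>G m\<^esub> \<otimes>\<^bsub>G (l+m+n)\<^esub> t l (m+n) \<one>\<^bsub>G l\<^esub> (b m n)"

definition stab :: "(nat \<Rightarrow> 'g monoid) \<Rightarrow> (nat \<Rightarrow> nat \<Rightarrow> 'g \<Rightarrow> 'g \<Rightarrow> 'g) \<Rightarrow> nat \<Rightarrow> nat \<Rightarrow> 'g set" where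
  "stab G t k j = (\<lambda>g. t k j g \<one>\<^bsub>G j\<^esub>) ` carrier (G k)"

text \<open>Hom(m,n) in UG: left cosets f G_{n-m} in G_n for m \<le> n, empty otherwise.\<close>
definition UHom :: "(nat \<Rightarrow> 'g monoid) \<Rightarrow> (nat \<Rightarrow> nat \<Rightarrow> 'g \<Rightarrow> 'g \<Rightarrow> 'g) \<Rightarrow> nat \<Rightarrow> nat \<Rightarrow> 'g set set" where
  "UHom G t m n = (if m \<le> n then (\<lambda>f. f <#\<^bsub>G n\<^esub> stab G t (n - m) m) ` carrier (G n) else {})"

definition Uid :: "(nat \<Rightarrow> 'g monoid) \<Rightarrow> (nat \<Rightarrow> nat \<Rightarrow> 'g \<Rightarrow> 'g \<Rightarrow> 'g) \<Rightarrow> nat \<Rightarrow> 'g set" where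
  "Uid G t n = \<one>\<^bsub>G n\<^esub> <#\<^bsub>G n\<^esub> stab G t 0 n"

text \<open>The unique morphism 0 \<rightarrow> m.\<close>
definition Uiota :: "(nat \<Rightarrow> 'g monoid) \<Rightarrow> (nat \<Rightarrow> nat \<Rightarrow> 'g \<Rightarrow> 'g \<Rightarrow> 'g) \<Rightarrow> nat \<Rightarrow> 'g set" where
  "Uiota G t m = (THE X. X \<in> UHom G t 0 m)"

text \<open>Composition Y \<circ> X for X : k \<rightarrow> j, Y : j \<rightarrow> i:
  f G_{i-j} \<circ> g G_{j-k} = f (id_{i-j} \<oplus> g) G_{i-k}; written representative-independently.\<close>
definition UComp :: "(nat \<Rightarrow> 'g monoid) \<Rightarrow> (nat \<Rightarrow> nat \<Rightarrow> 'g \<Rightarrow> 'g \<Rightarrow> 'g)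
    \<Rightarrow> nat \<Rightarrow> nat \<Rightarrow> nat \<Rightarrow> 'g set \<Rightarrow> 'g set \<Rightarrow> 'g set" where
  "UComp G t k j i Y X =
     (\<Union>f\<in>Y. \<Union>g\<in>X. (f \<otimes>\<^bsub>G i\<^esub> t (i - j) j \<one>\<^bsub>G (i - j)\<^esub> g) <#\<^bsub>G i\<^esub> stab G t (i - k) k)"

text \<open>Monoidal product of X1 : n1 \<rightarrow> m1+n1 and X2 : n2 \<rightarrow> m2+n2:
  (f1 \<oplus> f2)(id_{m1} \<oplus> b^{-1}_{n1,m2} \<oplus> id_{n2}) G_{m1+m2}.\<close>
definition UTensor :: "(nat \<Rightarrow> 'g monoid) \<Rightarrow> (nat \<Rightarrow> nat \<Rightarrow> 'g \<Rightarrow> 'g \<Rightarrow> 'g) \<Rightarrow> (nat \<Rightarrow> nat \<Rightarrow> 'g)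
    \<Rightarrow> nat \<Rightarrow> nat \<Rightarrow> nat \<Rightarrow> nat \<Rightarrow> 'g set \<Rightarrow> 'g set \<Rightarrow> 'g set" where
  "UTensor G t b n1 m1 n2 m2 X1 X2 =
     (\<Union>f1\<in>X1. \<Union>f2\<in>X2.
        (t (m1+n1) (m2+n2) f1 f2 \<otimes>\<^bsub>G (m1+n1+m2+n2)\<^esub>
          t m1 (n1+m2+n2) \<one>\<^bsub>G m1\<^esub>
            (t (n1+m2) n2 (inv\<^bsub>G (n1+m2)\<^esub> (b n1 m2)) \<one>\<^bsub>G n2\<^esub>))
        <#\<^bsub>G (m1+n1+m2+n2)\<^esub> stab G t (m1+m2) (n1+n2))"

end

theory Submission
  imports Defs "HOL-Algebra.Left_Coset"
begin

text \<open>
  Write \<open>S(k,j)\<close> for the image of \<open>g \<mapsto> g \<oplus> id\<^sub>j\<close> in \<open>G(k+j)\<close>, so that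
  \<open>Hom(m, l+m)\<close> consists of the cosets \<open>f S(l,m)\<close>. Tensoring with \<open>id\<^sub>n\<close> involves only the
  braiding \<open>b(l,0)\<close>, which the hexagon axiom forces to be trivial, so it sends \<open>f S(l,m)\<close> to
  \<open>(f \<oplus> id\<^sub>n) S(l,m+n)\<close>; since \<open>f \<mapsto> f \<oplus> id\<^sub>n\<close> is an injective homomorphism pulling
  \<open>S(l,m+n)\<close> back to \<open>S(l,m)\<close>, this is injective. The morphisms \<open>\<iota>\<^sub>k \<oplus> id\<^sub>n\<close> are the
  subgroups \<open>S(k,n)\<close>, and precomposing \<open>\<chi> = c S(l,m+n)\<close> with \<open>S(m,n)\<close> gives the coset
  \<open>c S(l+m,n)\<close>, because \<open>S(l,m+n)\<close> and \<open>id\<^sub>l \<oplus> S(m,n)\<close> both lie in \<open>S(l+m,n)\<close>. This coset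
  is \<open>S(l+m,n)\<close> exactly when \<open>c = f \<oplus> id\<^sub>n\<close>, i.e. when \<open>\<chi>\<close> is in the image.
\<close>

lemma (in group) l_coset_eq_iff:
  assumes H: "subgroup H G" and x: "x \<in> carrier G" and y: "y \<in> carrier G"
  shows "x <# H = y <# H \<longleftrightarrow> inv x \<otimes> y \<in> H"
proof
  assume "x <# H = y <# H"
  then have "y \<in> x <# H" using lcos_self[OF y H] by simp
  then show "inv x \<otimes> y \<in> H" by (rule subgroup.lcos_module_imp[OF H is_group x])
next
  assume "inv x \<otimes> y \<in> H"
  then have "y \<in> x <# H" by (rule subgroup.lcos_module_rev[OF H is_group x y])
  then show "x <# H = y <# H" by (rule l_repr_independence[OF _ x H])
qed

lemma (in group) l_coset_eq_self_iff:
  assumes H: "subgroup H G" and c: "c \<in> carrier G"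
  shows "c <# H = H \<longleftrightarrow> c \<in> H"
  using coset_join3[OF c H] lcos_self[OF c H] by auto

lemma (in group) l_coset_mult_superset:
  assumes S: "subgroup S G" and H: "subgroup H G" and "S \<subseteq> H" and c: "c \<in> carrier G"
    and "x \<in> c <# S" and "y \<in> H"
  shows "(x \<otimes> y) <# H = c <# H"
proof -
  obtain s where s: "s \<in> S" "x = c \<otimes> s" using assms(5) unfolding l_coset_def by blast
  have "s \<in> H" using s \<open>S \<subseteq> H\<close> by blast
  then have "s \<otimes> y \<in> H" using subgroup.m_closed[OF H] \<open>y \<in> H\<close> by blast
  moreover have "x \<otimes> y = c \<otimes> (s \<otimes> y)"
    using s(2) c \<open>s \<in> H\<close> \<open>y \<in> H\<close> subgroup.mem_carrier[OF H] by (simp add: m_assoc)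
  ultimately have "x \<otimes> y \<in> c <# H" unfolding l_coset_def by blast
  then show ?thesis by (rule l_repr_independence[OF _ c H, symmetric])
qed

context braided_stability_groupoid
begin

abbreviation tensor_id :: "nat \<Rightarrow> nat \<Rightarrow> 'g \<Rightarrow> 'g" where
  "tensor_id k j g \<equiv> t k j g \<one>\<^bsub>G j\<^esub>"

lemma G_one_closed [simp]: "\<one>\<^bsub>G n\<^esub> \<in> carrier (G n)"
  using group.is_monoid[OF grp] monoid.one_closed by blast

lemma group_hom_tensor_id: "group_hom (G k) (G (k+j)) (tensor_id k j)"
proof (intro group_hom.intro grp group_hom_axioms.intro homI)
  fix x y assume "x \<in> carrier (G k)" "y \<in> carrier (G k)"
  then show "tensor_id k j (x \<otimes>\<^bsub>G k\<^esub> y) = tensor_id k j x \<otimes>\<^bsub>G (k+j)\<^esub> tensor_id k j y"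
    using t_mult[of x k y "\<one>\<^bsub>G j\<^esub>" j "\<one>\<^bsub>G j\<^esub>"] group.is_monoid[OF grp, of j] by simp
qed (simp add: t_closed)

lemma subgroup_stab: "subgroup (stab G t k j) (G (k+j))"
  unfolding stab_def by (rule group_hom.img_is_subgroup[OF group_hom_tensor_id])

lemma tensor_id_in_stab: "g \<in> carrier (G k) \<Longrightarrow> tensor_id k j g \<in> stab G t k j"
  unfolding stab_def by blast

lemma inj_on_tensor_id: "inj_on (tensor_id k j) (carrier (G k))"
proof (rule inj_onI)
  fix x y assume "x \<in> carrier (G k)" "y \<in> carrier (G k)" "tensor_id k j x = tensor_id k j y"
  then show "x = y" using inj_onD[OF t_inj[of k j], of "(x, \<one>\<^bsub>G j\<^esub>)" "(y, \<one>\<^bsub>G j\<^esub>)"] by simp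
qed

lemma tensor_id_tensor_id:
  "h \<in> carrier (G l) \<Longrightarrow> tensor_id (l+m) n (tensor_id l m h) = tensor_id l (m+n) h"
  using t_assoc[of h l "\<one>\<^bsub>G m\<^esub>" m "\<one>\<^bsub>G n\<^esub>" n] t_one[of m n] by simp

lemma tensor_id_mem_stab_iff:
  assumes "g \<in> carrier (G (l+m))"
  shows "tensor_id (l+m) n g \<in> stab G t l (m+n) \<longleftrightarrow> g \<in> stab G t l m"
proof
  assume "tensor_id (l+m) n g \<in> stab G t l (m+n)"
  then obtain h where h: "h \<in> carrier (G l)" "tensor_id (l+m) n g = tensor_id l (m+n) h"
    unfolding stab_def by blast
  then have "tensor_id (l+m) n g = tensor_id (l+m) n (tensor_id l m h)"
    by (simp add: tensor_id_tensor_id)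
  then have "g = tensor_id l m h"
    using inj_onD[OF inj_on_tensor_id] assms h t_closed by simp
  then show "g \<in> stab G t l m" using h tensor_id_in_stab by simp
next
  assume "g \<in> stab G t l m"
  then show "tensor_id (l+m) n g \<in> stab G t l (m+n)"
    unfolding stab_def using tensor_id_tensor_id by auto
qed

lemma stab_subset_stab: "stab G t l (m+n) \<subseteq> stab G t (l+m) n"
proof
  fix x assume "x \<in> stab G t l (m+n)"
  then obtain h where "h \<in> carrier (G l)" "x = tensor_id l (m+n) h"
    unfolding stab_def by blast
  then show "x \<in> stab G t (l+m) n"
    using tensor_id_in_stab[of "tensor_id l m h" "l+m" n] t_closed[of h l "\<one>\<^bsub>G m\<^esub>" m]
    by (simp add: tensor_id_tensor_id)
qed

lemma one_tensor_stab_in_stab: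
  assumes "y \<in> stab G t m n"
  shows "t l (m+n) \<one>\<^bsub>G l\<^esub> y \<in> stab G t (l+m) n"
proof -
  obtain g where g: "g \<in> carrier (G m)" "y = tensor_id m n g"
    using assms unfolding stab_def by blast
  then have "t l (m+n) \<one>\<^bsub>G l\<^esub> y = tensor_id (l+m) n (t l m \<one>\<^bsub>G l\<^esub> g)"
    using t_assoc[of "\<one>\<^bsub>G l\<^esub>" l g m "\<one>\<^bsub>G n\<^esub>" n] by simp
  then show ?thesis using g t_closed tensor_id_in_stab by simp
qed

lemma stab_zero_left: "stab G t 0 n = {\<one>\<^bsub>G n\<^esub>}"
  unfolding stab_def using G0_trivial t_one[of 0 n] by simp

lemma stab_zero_right: "stab G t m 0 = carrier (G m)"
  unfolding stab_def using t_unit_right by simp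

lemma Uid_eq: "Uid G t n = {\<one>\<^bsub>G n\<^esub>}"
  unfolding Uid_def stab_zero_left l_coset_def using group.is_monoid[OF grp, of n] by simp

lemma Uiota_eq: "Uiota G t m = carrier (G m)"
proof -
  interpret group "G m" by (rule grp)
  have "UHom G t 0 m = {carrier (G m)}"
    unfolding UHom_def stab_zero_right
    using coset_join3[OF _ subgroup_self] by (auto simp: image_iff)
  then show ?thesis unfolding Uiota_def by simp
qed

lemma braiding_zero_right [simp]: "b l 0 = \<one>\<^bsub>G l\<^esub>"
proof -
  interpret group "G l" by (rule grp)
  have bc: "b l 0 \<in> carrier (G l)" using b_closed[of l 0] by simp
  have "b l 0 = b l 0 \<otimes>\<^bsub>G l\<^esub> b l 0"
    using hexagon1[of l 0 0] t_unit_left[OF bc] t_unit_right[OF bc] by simp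
  then show ?thesis using l_cancel_one[OF bc bc] bc by simp
qed

lemma UTensor_Uid:
  assumes "X \<subseteq> carrier (G (k+j))"
  shows "UTensor G t b j k n 0 X (Uid G t n)
     = (\<Union>f\<in>X. tensor_id (k+j) n f <#\<^bsub>G (k+j+n)\<^esub> stab G t k (j+n))"
proof -
  interpret group "G (k+j+n)" by (rule grp)
  have "t k (j+n) \<one>\<^bsub>G k\<^esub> (tensor_id j n (inv\<^bsub>G j\<^esub> \<one>\<^bsub>G j\<^esub>)) = \<one>\<^bsub>G (k+j+n)\<^esub>"
    using t_one monoid.inv_one[OF group.is_monoid[OF grp]] by (simp add: add.assoc)
  moreover have "tensor_id (k+j) n f \<in> carrier (G (k+j+n))" if "f \<in> X" for f
    using t_closed assms that by auto
  ultimately show ?thesis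
    unfolding UTensor_def Uid_eq by simp
qed

lemma UHom_add: "UHom G t m (l+m) = (\<lambda>f. f <#\<^bsub>G (l+m)\<^esub> stab G t l m) ` carrier (G (l+m))"
  by (simp add: UHom_def)

lemma subgroup_stab_assoc: "subgroup (stab G t l (m+n)) (G (l+m+n))"
  using subgroup_stab[of l "m+n"] by (simp add: add.assoc)

lemma tensor_id_coset_eq_iff:
  assumes f1: "f1 \<in> carrier (G (l+m))" and f2: "f2 \<in> carrier (G (l+m))"
  shows "tensor_id (l+m) n f1 <#\<^bsub>G (l+m+n)\<^esub> stab G t l (m+n)
           = tensor_id (l+m) n f2 <#\<^bsub>G (l+m+n)\<^esub> stab G t l (m+n)
     \<longleftrightarrow> f1 <#\<^bsub>G (l+m)\<^esub> stab G t l m = f2 <#\<^bsub>G (l+m)\<^esub> stab G t l m"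
proof -
  interpret group_hom "G (l+m)" "G (l+m+n)" "tensor_id (l+m) n" by (rule group_hom_tensor_id)
  note S = subgroup_stab_assoc[of l m n]
  have f12: "inv\<^bsub>G (l+m)\<^esub> f1 \<otimes>\<^bsub>G (l+m)\<^esub> f2 \<in> carrier (G (l+m))" using f1 f2 by simp
  have hom_eq: "inv\<^bsub>G (l+m+n)\<^esub> tensor_id (l+m) n f1 \<otimes>\<^bsub>G (l+m+n)\<^esub> tensor_id (l+m) n f2
      = tensor_id (l+m) n (inv\<^bsub>G (l+m)\<^esub> f1 \<otimes>\<^bsub>G (l+m)\<^esub> f2)"
    using f1 f2 by (simp add: hom_inv)
  have "tensor_id (l+m) n f1 <#\<^bsub>G (l+m+n)\<^esub> stab G t l (m+n)
          = tensor_id (l+m) n f2 <#\<^bsub>G (l+m+n)\<^esub> stab G t l (m+n)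
     \<longleftrightarrow> tensor_id (l+m) n (inv\<^bsub>G (l+m)\<^esub> f1 \<otimes>\<^bsub>G (l+m)\<^esub> f2) \<in> stab G t l (m+n)"
    using H.l_coset_eq_iff[OF S] f1 f2 hom_eq by simp
  also have "\<dots> \<longleftrightarrow> inv\<^bsub>G (l+m)\<^esub> f1 \<otimes>\<^bsub>G (l+m)\<^esub> f2 \<in> stab G t l m"
    by (rule tensor_id_mem_stab_iff[OF f12])
  also have "\<dots> \<longleftrightarrow> f1 <#\<^bsub>G (l+m)\<^esub> stab G t l m = f2 <#\<^bsub>G (l+m)\<^esub> stab G t l m"
    using G.l_coset_eq_iff[OF subgroup_stab] f1 f2 by simp
  finally show ?thesis .
qed

lemma UTensor_coset_Uid:
  assumes f: "f \<in> carrier (G (l+m))"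
  shows "UTensor G t b m l n 0 (f <#\<^bsub>G (l+m)\<^esub> stab G t l m) (Uid G t n)
     = tensor_id (l+m) n f <#\<^bsub>G (l+m+n)\<^esub> stab G t l (m+n)"
proof -
  interpret group "G (l+m)" by (rule grp)
  note S = subgroup_stab[of l m]
  have "f <#\<^bsub>G (l+m)\<^esub> stab G t l m \<subseteq> carrier (G (l+m))"
    using l_coset_subset_G[OF subgroup.subset[OF S] f] .
  moreover have "f <#\<^bsub>G (l+m)\<^esub> stab G t l m \<noteq> {}" using lcos_self[OF f S] by blast
  moreover have "tensor_id (l+m) n f' <#\<^bsub>G (l+m+n)\<^esub> stab G t l (m+n)
      = tensor_id (l+m) n f <#\<^bsub>G (l+m+n)\<^esub> stab G t l (m+n)"
    if f': "f' \<in> f <#\<^bsub>G (l+m)\<^esub> stab G t l m" for f'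
    using tensor_id_coset_eq_iff l_repr_independence[OF f' f S] l_coset_carrier[OF f' f S] f
    by simp
  ultimately show ?thesis using UTensor_Uid by (simp add: SUP_eq_const)
qed

lemma UTensor_Uiota_Uid: "UTensor G t b 0 k n 0 (Uiota G t k) (Uid G t n) = stab G t k n"
proof -
  interpret group "G (k+n)" by (rule grp)
  have "tensor_id k n f <#\<^bsub>G (k+n)\<^esub> stab G t k n = stab G t k n" if "f \<in> carrier (G k)" for f
    using coset_join3 t_closed subgroup_stab tensor_id_in_stab that by simp
  moreover have "carrier (G k) \<noteq> {}" using G_one_closed by blast
  ultimately show ?thesis
    using UTensor_Uid[of "carrier (G k)" k 0 n] unfolding Uiota_eq by simp
qed

lemma UComp_coset_stab:
  assumes c: "c \<in> carrier (G (l+m+n))"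
  shows "UComp G t n (m+n) (l+m+n) (c <#\<^bsub>G (l+m+n)\<^esub> stab G t l (m+n)) (stab G t m n)
     = c <#\<^bsub>G (l+m+n)\<^esub> stab G t (l+m) n"
proof -
  interpret group "G (l+m+n)" by (rule grp)
  have "(x \<otimes>\<^bsub>G (l+m+n)\<^esub> t l (m+n) \<one>\<^bsub>G l\<^esub> y) <#\<^bsub>G (l+m+n)\<^esub> stab G t (l+m) n
      = c <#\<^bsub>G (l+m+n)\<^esub> stab G t (l+m) n"
    if "x \<in> c <#\<^bsub>G (l+m+n)\<^esub> stab G t l (m+n)" "y \<in> stab G t m n" for x y
    using l_coset_mult_superset[OF subgroup_stab_assoc subgroup_stab stab_subset_stab c that(1)]
      one_tensor_stab_in_stab[OF that(2)] by blast
  moreover have "c <#\<^bsub>G (l+m+n)\<^esub> stab G t l (m+n) \<noteq> {}"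
    using lcos_self[OF c subgroup_stab_assoc] by blast
  moreover have "stab G t m n \<noteq> {}" using subgroup.one_closed[OF subgroup_stab] by blast
  moreover have "l+m+n - (m+n) = l" "l+m+n - n = l+m" by simp_all
  ultimately show ?thesis unfolding UComp_def by (simp add: SUP_eq_const)
qed

lemma inj_on_UTensor_Uid: "inj_on (\<lambda>\<psi>. UTensor G t b m l n 0 \<psi> (Uid G t n)) (UHom G t m (l+m))"
proof (rule inj_onI)
  fix \<psi> \<psi>' assume "\<psi> \<in> UHom G t m (l+m)" "\<psi>' \<in> UHom G t m (l+m)"
    and "UTensor G t b m l n 0 \<psi> (Uid G t n) = UTensor G t b m l n 0 \<psi>' (Uid G t n)"
  then show "\<psi> = \<psi>'"
    unfolding UHom_add using UTensor_coset_Uid tensor_id_coset_eq_iff by auto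
qed

lemma UTensor_Uid_image:
  "(\<lambda>\<psi>. UTensor G t b m l n 0 \<psi> (Uid G t n)) ` UHom G t m (l+m)
     = (\<lambda>c. c <#\<^bsub>G (l+m+n)\<^esub> stab G t l (m+n)) ` stab G t (l+m) n"
proof -
  have "(\<lambda>\<psi>. UTensor G t b m l n 0 \<psi> (Uid G t n)) ` UHom G t m (l+m)
      = (\<lambda>f. tensor_id (l+m) n f <#\<^bsub>G (l+m+n)\<^esub> stab G t l (m+n)) ` carrier (G (l+m))"
    unfolding UHom_add image_image using UTensor_coset_Uid by (intro image_cong) simp_all
  then show ?thesis by (simp add: stab_def image_image)
qed

lemma UHom_UComp_stab_eq:
  "{\<chi> \<in> UHom G t (m+n) (l+m+n). UComp G t n (m+n) (l+m+n) \<chi> (stab G t m n) = stab G t (l+m) n}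
     = (\<lambda>c. c <#\<^bsub>G (l+m+n)\<^esub> stab G t l (m+n)) ` stab G t (l+m) n"
proof -
  interpret group "G (l+m+n)" by (rule grp)
  have H: "subgroup (stab G t (l+m) n) (G (l+m+n))" by (rule subgroup_stab)
  have UHom_eq: "UHom G t (m+n) (l+m+n)
      = (\<lambda>c. c <#\<^bsub>G (l+m+n)\<^esub> stab G t l (m+n)) ` carrier (G (l+m+n))"
    using UHom_add[of "m+n" l] by (simp add: add.assoc)
  have UComp_eq_iff: "UComp G t n (m+n) (l+m+n) (c <#\<^bsub>G (l+m+n)\<^esub> stab G t l (m+n)) (stab G t m n)
      = stab G t (l+m) n \<longleftrightarrow> c \<in> stab G t (l+m) n"
    if "c \<in> carrier (G (l+m+n))" for c
    using UComp_coset_stab[OF that] l_coset_eq_self_iff[OF H that] by simp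
  show ?thesis
  proof (intro equalityI subsetI)
    fix \<chi> assume "\<chi> \<in> {\<chi> \<in> UHom G t (m+n) (l+m+n).
        UComp G t n (m+n) (l+m+n) \<chi> (stab G t m n) = stab G t (l+m) n}"
    then obtain c where "c \<in> carrier (G (l+m+n))" "\<chi> = c <#\<^bsub>G (l+m+n)\<^esub> stab G t l (m+n)"
        "UComp G t n (m+n) (l+m+n) \<chi> (stab G t m n) = stab G t (l+m) n"
      unfolding UHom_eq by blast
    then show "\<chi> \<in> (\<lambda>c. c <#\<^bsub>G (l+m+n)\<^esub> stab G t l (m+n)) ` stab G t (l+m) n"
      using UComp_eq_iff by blast
  next
    fix \<chi> assume "\<chi> \<in> (\<lambda>c. c <#\<^bsub>G (l+m+n)\<^esub> stab G t l (m+n)) ` stab G t (l+m) n"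
    then obtain c where c: "c \<in> stab G t (l+m) n" "\<chi> = c <#\<^bsub>G (l+m+n)\<^esub> stab G t l (m+n)"
      by blast
    then have "c \<in> carrier (G (l+m+n))" using subgroup.subset[OF H] by blast
    then show "\<chi> \<in> {\<chi> \<in> UHom G t (m+n) (l+m+n).
        UComp G t n (m+n) (l+m+n) \<chi> (stab G t m n) = stab G t (l+m) n}"
      using c UComp_eq_iff unfolding UHom_eq by blast
  qed
qed

end

theorem proposition4p1:
  fixes G :: "nat \<Rightarrow> 'g monoid"
    and t :: "nat \<Rightarrow> nat \<Rightarrow> 'g \<Rightarrow> 'g \<Rightarrow> 'g"
    and b :: "nat \<Rightarrow> nat \<Rightarrow> 'g"
    and l m n :: nat
  assumes "braided_stability_groupoid G t b"
  shows "inj_on (\<lambda>\<psi>. UTensor G t b m l n 0 \<psi> (Uid G t n)) (UHom G t m (l+m))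
    \<and> (\<lambda>\<psi>. UTensor G t b m l n 0 \<psi> (Uid G t n)) ` UHom G t m (l+m)
      = {\<chi> \<in> UHom G t (m+n) (l+m+n).
          UComp G t n (m+n) (l+m+n) \<chi> (UTensor G t b 0 m n 0 (Uiota G t m) (Uid G t n))
          = UTensor G t b 0 (l+m) n 0 (Uiota G t (l+m)) (Uid G t n)}"
proof -
  interpret braided_stability_groupoid G t b by (rule assms)
  show ?thesis
    using inj_on_UTensor_Uid UTensor_Uid_image UHom_UComp_stab_eq
    by (simp add: UTensor_Uiota_Uid)
qed

end
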